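(* Let $\mathscr{F}=(S,I,R,\sigma,\sigma_1)$ be a $\varkappa$-frame. Let $\delta:S\to W(S)$ be the unique ring homomorphism with $w_n\circ\delta=\sigma^n$ for all $n\geq 0$, and let $\varkappa:S\to W(R)$ be the composite of $\delta$ with $W(S)\to W(R)$. Then there is a unit $u\in W(R)$ such that $\varkappa$ is a $u$-homomorphism of frames $\mathscr{F}\to\mathscr{W}_R$ inducing the identity on $R$. This construction is functorial in $\mathscr{F}$.
   Context: Fix a prime $p$. A frame is $(S,I,R,\sigma,\sigma_1)$ with $S$ a ring, $I$ an ideal, $R=S/I$, $\sigma$ a ring endomorphism, $\sigma_1:I\to S$ a $\sigma$-linear map, such that $I+pS\subseteq\mathrm{Rad}(S)$, $\sigma(a)\equiv a^p\bmod pS$ for $a\in S$, and $\sigma_1(I)$ generates $S$ as an $S$-module. There is a unique $\theta\in S$ with $\sigma(a)=\theta\sigma_1(a)$ for $a\in I$. A $\varkappa$-frame is a frame such that $S$ has no $p$-torsion, $W(R)$ has no $p$-torsion, and $\sigma(\theta)-\theta^p=p\cdot(\text{unit of }S)$. The Witt frame of a ring $R$ (here $p$-adically complete is not needed beyond the frame axioms) is $\mathscr{W}_R=(W(R),I_R,R,f,f_1)$, $I_R=\ker(W(R)\to R)$, $f$ the Frobenius and $f_1$ the inverse of the Verschiebung $v:W(R)\to I_R$. $w_n$ denotes the $n$-th Witt ghost component. A $u$-homomorphism of frames $\mathscr{F}\to\mathscr{F}'$ is a ring homomorphism $\alpha:S\to S'$ with $\alpha(I)\subseteq I'$, $\sigma'\alpha=\alpha\sigma$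 and $\sigma_1'\alpha=u\cdot\alpha\sigma_1$ for a unit $u\in S'$. *)

theory Defs
  imports Main "HOL-Library.Poly_Mapping" "HOL-Computational_Algebra.Primes"
begin

type_synonym 'v mpoly = "('v \<Rightarrow>\<^sub>0 nat) \<Rightarrow>\<^sub>0 int"

definition mvar :: "'v \<Rightarrow> 'v mpoly" where
  "mvar v = Poly_Mapping.single (Poly_Mapping.single v 1) 1"

definition mpoly_eval :: "('v \<Rightarrow> 'r::comm_ring_1) \<Rightarrow> 'v mpoly \<Rightarrow> 'r" where
  "mpoly_eval f P =
     (\<Sum>m\<in>Poly_Mapping.keys P. of_int (Poly_Mapping.lookup P m) * (\<Prod>v\<in>Poly_Mapping.keys m. f v ^ Poly_Mapping.lookup m v))"

definition witt_ghost :: "nat \<Rightarrow> nat \<Rightarrow> (nat \<Rightarrow> 'r::comm_ring_1) \<Rightarrow> 'r" where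
  "witt_ghost p n x = (\<Sum>i\<le>n. of_nat p ^ i * x i ^ (p ^ (n - i)))"

definition witt_polys :: "nat \<Rightarrow> (nat \<Rightarrow> 'v mpoly) \<Rightarrow> nat \<Rightarrow> 'v mpoly" where
  "witt_polys p G = (THE \<Phi>. \<forall>n. witt_ghost p n \<Phi> = G n)"

definition witt_add_polys :: "nat \<Rightarrow> nat \<Rightarrow> (nat + nat) mpoly" where
  "witt_add_polys p = witt_polys p
     (\<lambda>n. witt_ghost p n (\<lambda>i. mvar (Inl i)) + witt_ghost p n (\<lambda>i. mvar (Inr i)))"

definition witt_mult_polys :: "nat \<Rightarrow> nat \<Rightarrow> (nat + nat) mpoly" where
  "witt_mult_polys p = witt_polys p
     (\<lambda>n. witt_ghost p n (\<lambda>i. mvar (Inl i)) * witt_ghost p n (\<lambda>i. mvar (Inr i)))"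

definition witt_frob_polys :: "nat \<Rightarrow> nat \<Rightarrow> nat mpoly" where
  "witt_frob_polys p = witt_polys p (\<lambda>n. witt_ghost p (Suc n) mvar)"

definition witt_add :: "nat \<Rightarrow> (nat \<Rightarrow> 'r::comm_ring_1) \<Rightarrow> (nat \<Rightarrow> 'r) \<Rightarrow> nat \<Rightarrow> 'r" where
  "witt_add p x y = (\<lambda>n. mpoly_eval (case_sum x y) (witt_add_polys p n))"

definition witt_mult :: "nat \<Rightarrow> (nat \<Rightarrow> 'r::comm_ring_1) \<Rightarrow> (nat \<Rightarrow> 'r) \<Rightarrow> nat \<Rightarrow> 'r" where
  "witt_mult p x y = (\<lambda>n. mpoly_eval (case_sum x y) (witt_mult_polys p n))"

definition witt_zero :: "nat \<Rightarrow> 'r::comm_ring_1" where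
  "witt_zero = (\<lambda>n. 0)"

definition witt_one :: "nat \<Rightarrow> 'r::comm_ring_1" where
  "witt_one = (\<lambda>n. if n = 0 then 1 else 0)"

definition witt_frob :: "nat \<Rightarrow> (nat \<Rightarrow> 'r::comm_ring_1) \<Rightarrow> nat \<Rightarrow> 'r" where
  "witt_frob p x = (\<lambda>n. mpoly_eval x (witt_frob_polys p n))"

text \<open>f_1 : I_R -> W(R), the inverse of the Verschiebung v(x) = (0, x_0, x_1, ...).\<close>
definition witt_f1 :: "(nat \<Rightarrow> 'r) \<Rightarrow> nat \<Rightarrow> 'r" where
  "witt_f1 x = (\<lambda>n. x (Suc n))"

definition witt_nsmul :: "nat \<Rightarrow> nat \<Rightarrow> (nat \<Rightarrow> 'r::comm_ring_1) \<Rightarrow> nat \<Rightarrow> 'r" where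
  "witt_nsmul p k x = ((witt_add p x) ^^ k) witt_zero"

definition witt_unit :: "nat \<Rightarrow> (nat \<Rightarrow> 'r::comm_ring_1) \<Rightarrow> bool" where
  "witt_unit p u \<longleftrightarrow> (\<exists>v. witt_mult p u v = witt_one)"

definition witt_map :: "('a \<Rightarrow> 'b) \<Rightarrow> (nat \<Rightarrow> 'a) \<Rightarrow> nat \<Rightarrow> 'b" where
  "witt_map g x = (\<lambda>n. g (x n))"

definition jacobson_radical :: "'a::comm_ring_1 set" where
  "jacobson_radical = {a. \<forall>b. (1 - a * b) dvd 1}"

definition ring_hom_on :: "('a::comm_ring_1 \<Rightarrow> 'b::comm_ring_1) \<Rightarrow> bool" where
  "ring_hom_on f \<longleftrightarrow> (\<forall>a b. f (a + b) = f a + f b) \<and> (\<forall>a b. f (a * b) = f a * f b) \<and> f 1 = 1"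

text \<open>A frame (S, I, R, sigma, sigma_1); S is the ring of type 'a, and R = S/I is given
  (up to unique isomorphism) by a surjective ring homomorphism pi : S -> R with kernel I.\<close>
definition frame ::
  "nat \<Rightarrow> 'a::comm_ring_1 set \<Rightarrow> ('a \<Rightarrow> 'r::comm_ring_1) \<Rightarrow> ('a \<Rightarrow> 'a) \<Rightarrow> ('a \<Rightarrow> 'a) \<Rightarrow> bool" where
  "frame p I \<pi> \<sigma> \<sigma>1 \<longleftrightarrow>
     ring_hom_on \<pi> \<and> surj \<pi> \<and> I = {a. \<pi> a = 0} \<and>
     ring_hom_on \<sigma> \<and>
     (\<forall>a\<in>I. \<forall>b\<in>I. \<sigma>1 (a + b) = \<sigma>1 a + \<sigma>1 b) \<and>
     (\<forall>s. \<forall>a\<in>I. \<sigma>1 (s * a) = \<sigma> s * \<sigma>1 a) \<and>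
     (\<forall>a\<in>I. \<forall>s. a + of_nat p * s \<in> jacobson_radical) \<and>
     (\<forall>a. \<exists>s. \<sigma> a - a ^ p = of_nat p * s) \<and>
     (\<forall>x. \<exists>(k::nat) c b. (\<forall>i<k. b i \<in> I) \<and> x = (\<Sum>i<k. c i * \<sigma>1 (b i)))"

definition kappa_frame ::
  "nat \<Rightarrow> 'a::comm_ring_1 set \<Rightarrow> ('a \<Rightarrow> 'r::comm_ring_1) \<Rightarrow> ('a \<Rightarrow> 'a) \<Rightarrow> ('a \<Rightarrow> 'a) \<Rightarrow> bool" where
  "kappa_frame p I \<pi> \<sigma> \<sigma>1 \<longleftrightarrow>
     frame p I \<pi> \<sigma> \<sigma>1 \<and>
     (\<forall>a::'a. of_nat p * a = 0 \<longrightarrow> a = 0) \<and>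
     (\<forall>x::nat \<Rightarrow> 'r. witt_nsmul p p x = witt_zero \<longrightarrow> x = witt_zero) \<and>
     (\<exists>\<theta>. (\<forall>a\<in>I. \<sigma> a = \<theta> * \<sigma>1 a) \<and>
          (\<exists>e. e dvd 1 \<and> \<sigma> \<theta> - \<theta> ^ p = of_nat p * e))"

definition frame_uhom ::
  "'a::comm_ring_1 set \<Rightarrow> ('a \<Rightarrow> 'a) \<Rightarrow> ('a \<Rightarrow> 'a) \<Rightarrow>
   'b::comm_ring_1 set \<Rightarrow> ('b \<Rightarrow> 'b) \<Rightarrow> ('b \<Rightarrow> 'b) \<Rightarrow> 'b \<Rightarrow> ('a \<Rightarrow> 'b) \<Rightarrow> bool" where
  "frame_uhom I \<sigma> \<sigma>1 I' \<sigma>' \<sigma>1' u \<alpha> \<longleftrightarrow>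
     u dvd 1 \<and> ring_hom_on \<alpha> \<and> \<alpha> ` I \<subseteq> I' \<and>
     (\<forall>a. \<sigma>' (\<alpha> a) = \<alpha> (\<sigma> a)) \<and>
     (\<forall>a\<in>I. \<sigma>1' (\<alpha> a) = u * \<alpha> (\<sigma>1 a))"

definition witt_frame_uhom ::
  "nat \<Rightarrow> 'a::comm_ring_1 set \<Rightarrow> ('a \<Rightarrow> 'a) \<Rightarrow> ('a \<Rightarrow> 'a) \<Rightarrow>
   (nat \<Rightarrow> 'r::comm_ring_1) \<Rightarrow> ('a \<Rightarrow> nat \<Rightarrow> 'r) \<Rightarrow> bool" where
  "witt_frame_uhom p I \<sigma> \<sigma>1 u \<alpha> \<longleftrightarrow>
     witt_unit p u \<and>
     (\<forall>a b. \<alpha> (a + b) = witt_add p (\<alpha> a) (\<alpha> b)) \<and>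
     (\<forall>a b. \<alpha> (a * b) = witt_mult p (\<alpha> a) (\<alpha> b)) \<and>
     \<alpha> 1 = witt_one \<and>
     (\<forall>a\<in>I. \<alpha> a 0 = 0) \<and>
     (\<forall>a. witt_frob p (\<alpha> a) = \<alpha> (\<sigma> a)) \<and>
     (\<forall>a\<in>I. witt_f1 (\<alpha> a) = witt_mult p u (\<alpha> (\<sigma>1 a)))"

definition witt_delta :: "nat \<Rightarrow> ('a::comm_ring_1 \<Rightarrow> 'a) \<Rightarrow> ('a \<Rightarrow> nat \<Rightarrow> 'a) \<Rightarrow> bool" where
  "witt_delta p \<sigma> \<delta> \<longleftrightarrow>
     (\<forall>a b. \<delta> (a + b) = witt_add p (\<delta> a) (\<delta> b)) \<and>
     (\<forall>a b. \<delta> (a * b) = witt_mult p (\<delta> a) (\<delta> b)) \<and>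
     \<delta> 1 = witt_one \<and>
     (\<forall>a n. witt_ghost p n (\<delta> a) = (\<sigma> ^^ n) a)"

end

theory Submission
  imports Defs
begin

text \<open>Since \<open>S\<close> has no \<open>p\<close>-torsion, a map into \<open>W(S)\<close> is determined by its ghost
  components; so \<open>\<varkappa> = W(\<pi>) \<circ> \<delta>\<close> is a ring homomorphism commuting with the Frobenius,
  because \<open>w\<^sub>n \<circ> \<delta> = \<sigma>\<^sup>n\<close>. For \<open>a \<in> I\<close> the vector \<open>\<varkappa> a\<close> lies in the image of the
  Verschiebung, and \<open>f v = p\<close> gives \<open>p f\<^sub>1(\<varkappa> a) = \<varkappa>(\<sigma> a) = \<varkappa>(\<theta>) \<varkappa>(\<sigma>\<^sub>1 a)\<close>. As \<open>\<sigma>\<^sub>1(I)\<close>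
  generates \<open>S\<close>, \<open>\<varkappa>(\<theta>) = p u\<close> for some \<open>u\<close>, and since \<open>W(R)\<close> has no \<open>p\<close>-torsion,
  \<open>f\<^sub>1(\<varkappa> a) = u \<varkappa>(\<sigma>\<^sub>1 a)\<close>. Applying \<open>\<varkappa>\<close> to \<open>\<sigma>(\<theta>) - \<theta>\<^sup>p = p e\<close> yields
  \<open>f(u) = p\<^sup>p\<^sup>-\<^sup>1 u\<^sup>p + \<varkappa>(e)\<close>, whose \<open>0\<close>-th component shows that \<open>u\<^sub>0\<close> is a unit, \<open>p\<close> being in
  the radical of \<open>R\<close>; a Witt vector with invertible \<open>0\<close>-th component is then inverted
  component by component. Functoriality again follows from ghost components in \<open>W(S')\<close>.

  The Witt vector operations are given by universal integer polynomials, whose existence is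
  Dwork's lemma for the Frobenius lift \<open>X \<mapsto> X\<^sup>p\<close> on polynomial rings.\<close>

context
  fixes g :: "'a::comm_ring_1 \<Rightarrow> 'b::comm_ring_1"
  assumes hom: "ring_hom_on g"
begin

lemma ring_hom_on_add: "g (a + b) = g a + g b"
  and ring_hom_on_mult: "g (a * b) = g a * g b"
  and ring_hom_on_one: "g 1 = 1"
  using hom by (simp_all add: ring_hom_on_def)

lemma ring_hom_on_zero: "g 0 = 0"
  using ring_hom_on_add[of 0 0] by simp

lemma ring_hom_on_uminus: "g (- a) = - g a"
  using ring_hom_on_add[of a "- a"] by (simp add: ring_hom_on_zero eq_neg_iff_add_eq_0 add.commute)

lemma ring_hom_on_diff: "g (a - b) = g a - g b"
  using ring_hom_on_add[of a "- b"] by (simp add: ring_hom_on_uminus)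

lemma ring_hom_on_sum: "g (sum f A) = (\<Sum>x\<in>A. g (f x))"
  by (induction A rule: infinite_finite_induct) (auto simp: ring_hom_on_zero ring_hom_on_add)

lemma ring_hom_on_prod: "g (prod f A) = (\<Prod>x\<in>A. g (f x))"
  by (induction A rule: infinite_finite_induct) (auto simp: ring_hom_on_one ring_hom_on_mult)

lemma ring_hom_on_power: "g (a ^ n) = g a ^ n"
  by (induction n) (auto simp: ring_hom_on_one ring_hom_on_mult)

lemma ring_hom_on_of_nat: "g (of_nat n) = of_nat n"
  by (induction n) (auto simp: ring_hom_on_zero ring_hom_on_one ring_hom_on_add)

lemma ring_hom_on_of_int: "g (of_int k) = of_int k"
  by (cases k) (auto simp: ring_hom_on_of_nat ring_hom_on_uminus ring_hom_on_diff ring_hom_on_one)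

lemma ring_hom_on_unit: "a dvd 1 \<Longrightarrow> g a dvd 1"
  by (metis dvdE dvdI ring_hom_on_mult ring_hom_on_one)

end

definition monomial_eval :: "('v \<Rightarrow> 'r::comm_ring_1) \<Rightarrow> ('v \<Rightarrow>\<^sub>0 nat) \<Rightarrow> 'r" where
  "monomial_eval f m = (\<Prod>v\<in>Poly_Mapping.keys m. f v ^ Poly_Mapping.lookup m v)"

lemma mpoly_eval_monomials:
  assumes "finite K" "Poly_Mapping.keys P \<subseteq> K"
  shows "mpoly_eval f P = (\<Sum>m\<in>K. of_int (Poly_Mapping.lookup P m) * monomial_eval f m)"
  unfolding mpoly_eval_def monomial_eval_def
  by (rule sum.mono_neutral_left) (use assms in \<open>auto simp: in_keys_iff\<close>)

lemma monomial_eval_superset: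
  assumes "finite K" "Poly_Mapping.keys m \<subseteq> K"
  shows "monomial_eval f m = (\<Prod>v\<in>K. f v ^ Poly_Mapping.lookup m v)"
  unfolding monomial_eval_def
  by (rule prod.mono_neutral_left) (use assms in \<open>auto simp: in_keys_iff\<close>)

lemma monomial_eval_add: "monomial_eval f (m + n) = monomial_eval f m * monomial_eval f n"
  using keys_add[of m n]
  by (subst (1 2 3) monomial_eval_superset[where K = "Poly_Mapping.keys m \<union> Poly_Mapping.keys n"])
     (auto simp: lookup_add power_add prod.distrib)

lemma mpoly_eval_add: "mpoly_eval f (P + Q) = mpoly_eval f P + mpoly_eval f Q"
  using keys_add[of P Q]
  by (subst (1 2 3) mpoly_eval_monomials[where K = "Poly_Mapping.keys P \<union> Poly_Mapping.keys Q"])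
     (auto simp: lookup_add sum.distrib algebra_simps)

lemma mpoly_eval_zero: "mpoly_eval f 0 = 0"
  by (simp add: mpoly_eval_def)

lemma mpoly_eval_diff: "mpoly_eval f (P - Q) = mpoly_eval f P - mpoly_eval f Q"
proof -
  have "mpoly_eval f (- Q) = - mpoly_eval f Q"
    by (simp add: mpoly_eval_def keys_minus sum_negf)
  then show ?thesis
    using mpoly_eval_add[of f P "- Q"] by simp
qed

lemma mpoly_eval_single: "mpoly_eval f (Poly_Mapping.single m c) = of_int c * monomial_eval f m"
  by (cases "c = 0") (auto simp: mpoly_eval_def monomial_eval_def)

lemma mpoly_eval_mult: "mpoly_eval f (P * Q) = mpoly_eval f P * mpoly_eval f Q"
proof -
  have single_mult: "mpoly_eval f (Poly_Mapping.single m 1 * Q) = monomial_eval f m * mpoly_eval f Q" for m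
    using subset_refl[of "Poly_Mapping.keys Q"]
    by (induction Q rule: frag_induction)
       (simp_all add: mpoly_eval_zero mult_single mpoly_eval_single monomial_eval_add
         right_diff_distrib mpoly_eval_diff)
  show ?thesis
    using subset_refl[of "Poly_Mapping.keys P"]
    by (induction P rule: frag_induction)
       (simp_all add: mpoly_eval_zero single_mult mpoly_eval_single left_diff_distrib mpoly_eval_diff)
qed

lemma ring_hom_on_mpoly_eval: "ring_hom_on (mpoly_eval f)"
  using mpoly_eval_single[of f 0 1]
  by (simp add: ring_hom_on_def mpoly_eval_add mpoly_eval_mult monomial_eval_def)

lemma mpoly_eval_mvar: "mpoly_eval f (mvar v) = f v"
  by (simp add: mvar_def mpoly_eval_single monomial_eval_def)

lemma ring_hom_on_mpoly_eval_comp: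
  "ring_hom_on g \<Longrightarrow> g (mpoly_eval f P) = mpoly_eval (g \<circ> f) P"
  by (simp add: mpoly_eval_def ring_hom_on_sum ring_hom_on_mult ring_hom_on_of_int
      ring_hom_on_prod ring_hom_on_power)

lemma monomial_eval_mvar: "monomial_eval mvar m = Poly_Mapping.single m 1"
proof -
  let ?X = "\<lambda>v. Poly_Mapping.single (Poly_Mapping.single v (Suc 0)) (1::int)"
  have power: "?X v ^ n = Poly_Mapping.single (Poly_Mapping.single v n) 1" for v :: 'v and n
    by (induction n) (auto simp: mult_single single_add[symmetric])
  have prod: "(\<Prod>v\<in>A. ?X v ^ e v) = Poly_Mapping.single (\<Sum>v\<in>A. Poly_Mapping.single v (e v)) 1"
    if "finite A" for A :: "'v set" and e
    using that
  proof (induction A rule: finite_induct)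
    case (insert x F)
    then show ?case
      by (simp add: power mult_single)
  qed simp
  have "monomial_eval mvar m = (\<Prod>v\<in>Poly_Mapping.keys m. ?X v ^ Poly_Mapping.lookup m v)"
    by (simp add: monomial_eval_def mvar_def)
  also have "\<dots> = Poly_Mapping.single (\<Sum>v\<in>Poly_Mapping.keys m. Poly_Mapping.single v (Poly_Mapping.lookup m v)) 1"
    by (rule prod) simp
  also have "(\<Sum>v\<in>Poly_Mapping.keys m. Poly_Mapping.single v (Poly_Mapping.lookup m v)) = m"
    by (rule poly_mapping_eqI) (simp add: lookup_sum lookup_single when_def in_keys_iff)
  finally show ?thesis .
qed

lemma mpoly_no_p_torsion:
  assumes "p \<noteq> 0"
  shows "\<forall>P::'v mpoly. of_nat p * P = 0 \<longrightarrow> P = 0"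
proof (intro allI impI)
  fix P :: "'v mpoly"
  assume "of_nat p * P = 0"
  then have scaled: "Poly_Mapping.lookup (Poly_Mapping.map ((*) (of_nat p)) P) m = 0" for m
    by (simp add: mult_map_scale_conv_mult)
  have "int p * Poly_Mapping.lookup P m = 0" for m
    using scaled[of m] by (simp add: Poly_Mapping.map.rep_eq when_def split: if_splits)
  then have "Poly_Mapping.lookup P m = 0" for m
    using assms by simp
  then show "P = 0"
    by (simp add: poly_mapping_eqI)
qed

lemma prime_dvd_add_power_diff:
  fixes x y :: "'a::comm_ring_1"
  assumes "prime p"
  shows "of_nat p dvd ((x + y) ^ p - x ^ p - y ^ p)"
proof -
  let ?t = "\<lambda>k. of_nat (p choose k) * x ^ k * y ^ (p - k) :: 'a"
  have "p > 0"
    using assms prime_gt_0_nat by blast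
  have "(x + y) ^ p = (\<Sum>k\<in>{..p} - {0, p}. ?t k) + (\<Sum>k\<in>{0, p}. ?t k)"
    by (simp add: binomial_ring sum.subset_diff[of "{0, p}" "{..p}"])
  then have "(x + y) ^ p - x ^ p - y ^ p = (\<Sum>k\<in>{..p} - {0, p}. ?t k)"
    using \<open>p > 0\<close> by simp
  moreover have "of_nat p dvd (\<Sum>k\<in>{..p} - {0, p}. ?t k)"
  proof (rule dvd_sum)
    fix k
    assume "k \<in> {..p} - {0, p}"
    then have "p dvd (p choose k)"
      using assms by (intro dvd_choose_prime) auto
    then obtain q where "p choose k = p * q"
      by blast
    then show "of_nat p dvd ?t k"
      by (simp add: mult.assoc)
  qed
  ultimately show ?thesis
    by simp
qed

lemma of_nat_power_dvd_power_diff: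
  fixes a b :: "'a::comm_ring_1"
  assumes "j \<ge> 1" "of_nat p ^ j dvd (a - b)"
  shows "of_nat p ^ Suc j dvd (a ^ p - b ^ p)"
proof -
  let ?S = "\<lambda>c. \<Sum>i<p. b ^ (p - Suc i) * c ^ i"
  have "of_nat p dvd (of_nat p ^ j :: 'a)"
    using assms(1) by (simp add: dvd_power)
  then have p_dvd: "of_nat p dvd (a - b)"
    using assms(2) by (rule dvd_trans)
  have "?S a - ?S b = (\<Sum>i<p. b ^ (p - Suc i) * (a ^ i - b ^ i))"
    by (simp add: sum_subtractf right_diff_distrib)
  moreover have "of_nat p dvd b ^ (p - Suc i) * (a ^ i - b ^ i)" for i
  proof -
    have "(a - b) dvd (a ^ i - b ^ i)"
      by (simp add: power_diff_sumr2)
    with p_dvd show ?thesis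
      by (blast intro: dvd_mult dvd_trans)
  qed
  ultimately have "of_nat p dvd ?S a - ?S b"
    by (simp add: dvd_sum)
  then have "of_nat p dvd (?S a - ?S b) + of_nat p * b ^ (p - 1)"
    by (rule dvd_add) simp
  moreover have "?S b = of_nat p * b ^ (p - 1)"
    by (simp add: power_add[symmetric])
  ultimately have "of_nat p dvd ?S a"
    by simp
  with assms(2) have "of_nat p ^ j * of_nat p dvd (a - b) * ?S a"
    by (rule mult_dvd_mono)
  moreover have "a ^ p - b ^ p = (a - b) * ?S a"
    by (rule power_diff_sumr2)
  ultimately show ?thesis
    by (simp add: mult.commute)
qed

lemma of_nat_power_dvd_power_pow_diff:
  fixes a b :: "'a::comm_ring_1"
  assumes "of_nat p dvd (a - b)"
  shows "of_nat p ^ Suc k dvd (a ^ (p ^ k) - b ^ (p ^ k))"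
proof (induction k)
  case (Suc k)
  then have "of_nat p ^ Suc (Suc k) dvd (a ^ p ^ k) ^ p - (b ^ p ^ k) ^ p"
    by (intro of_nat_power_dvd_power_diff) simp_all
  then show ?case
    by (simp flip: power_mult add: mult.commute)
qed (use assms in simp)

lemma witt_ghost_0: "witt_ghost p 0 x = x 0"
  by (simp add: witt_ghost_def)

lemma witt_ghost_Suc:
  "witt_ghost p (Suc n) x = (\<Sum>i\<le>n. of_nat p ^ i * x i ^ p ^ (Suc n - i)) + of_nat p ^ Suc n * x (Suc n)"
  by (simp add: witt_ghost_def)

lemma witt_ghost_lessThan:
  "witt_ghost p n x = (\<Sum>i<n. of_nat p ^ i * x i ^ p ^ (n - i)) + of_nat p ^ n * x n"
  by (simp add: witt_ghost_def lessThan_Suc_atMost[symmetric])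

lemma witt_ghost_cong: "(\<And>i. i \<le> n \<Longrightarrow> x i = y i) \<Longrightarrow> witt_ghost p n x = witt_ghost p n y"
  by (simp add: witt_ghost_def)

lemma ring_hom_on_witt_ghost: "ring_hom_on g \<Longrightarrow> g (witt_ghost p n x) = witt_ghost p n (\<lambda>i. g (x i))"
  by (simp add: witt_ghost_def ring_hom_on_sum ring_hom_on_mult ring_hom_on_power ring_hom_on_of_nat)

lemma of_nat_power_mult_cancel:
  fixes a b :: "'a::comm_ring_1"
  assumes "\<forall>a::'a. of_nat p * a = 0 \<longrightarrow> a = 0" "of_nat p ^ n * a = of_nat p ^ n * b"
  shows "a = b"
  using assms(2)
proof (induction n arbitrary: a b)
  case (Suc n)
  then have "of_nat p ^ n * (of_nat p * a) = of_nat p ^ n * (of_nat p * b)"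
    by (simp add: mult_ac)
  then have "of_nat p * (a - b) = 0"
    using Suc.IH by (simp add: right_diff_distrib)
  then have "a - b = 0"
    using assms(1) by blast
  then show ?case
    by simp
qed simp

lemma witt_ghost_eq_upto:
  fixes x y :: "nat \<Rightarrow> 'a::comm_ring_1"
  assumes "\<forall>a::'a. of_nat p * a = 0 \<longrightarrow> a = 0"
    and "\<And>n. n \<le> k \<Longrightarrow> witt_ghost p n x = witt_ghost p n y"
  shows "x k = y k"
  using assms(2)
proof (induction k rule: less_induct)
  case (less k)
  then have "(\<Sum>i<k. of_nat p ^ i * x i ^ p ^ (k - i)) = (\<Sum>i<k. of_nat p ^ i * y i ^ p ^ (k - i))"
    by (intro sum.cong) auto
  with less.prems[of k] have "of_nat p ^ k * x k = of_nat p ^ k * y k"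
    by (simp add: witt_ghost_lessThan[of p k])
  then show ?case
    by (rule of_nat_power_mult_cancel[OF assms(1)])
qed

lemma witt_ghost_inj:
  fixes x y :: "nat \<Rightarrow> 'a::comm_ring_1"
  assumes "\<forall>a::'a. of_nat p * a = 0 \<longrightarrow> a = 0"
    and "\<And>n. witt_ghost p n x = witt_ghost p n y"
  shows "x = y"
  using witt_ghost_eq_upto[OF assms(1)] assms(2) by blast

section \<open>Dwork's lemma\<close>

lemma witt_ghost_frobenius_lift_congruence:
  fixes \<phi> :: "'a::comm_ring_1 \<Rightarrow> 'a"
  assumes hom: "ring_hom_on \<phi>" and lift: "\<And>a. of_nat p dvd \<phi> a - a ^ p"
  shows "of_nat p ^ Suc n dvd witt_ghost p (Suc n) x - \<phi> (witt_ghost p n x)"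
proof -
  have "of_nat p ^ Suc n dvd of_nat p ^ i * (x i ^ p ^ (Suc n - i) - \<phi> (x i) ^ p ^ (n - i))"
    if "i \<le> n" for i
  proof -
    have "of_nat p dvd x i ^ p - \<phi> (x i)"
      using lift[of "x i"] by (subst dvd_minus_iff[symmetric]) simp
    then have "of_nat p ^ Suc (n - i) dvd (x i ^ p) ^ p ^ (n - i) - \<phi> (x i) ^ p ^ (n - i)"
      by (rule of_nat_power_dvd_power_pow_diff)
    moreover have "(x i ^ p) ^ p ^ (n - i) = x i ^ p ^ (Suc n - i)"
      using that by (simp add: Suc_diff_le power_mult[symmetric])
    moreover have "of_nat p ^ Suc n = of_nat p ^ i * (of_nat p ^ Suc (n - i) :: 'a)"
    proof -
      have "Suc n = i + Suc (n - i)"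
        using that by simp
      then show ?thesis
        by (metis power_add)
    qed
    ultimately show ?thesis
      by (simp add: mult_dvd_mono)
  qed
  then have "of_nat p ^ Suc n dvd (\<Sum>i\<le>n. of_nat p ^ i * (x i ^ p ^ (Suc n - i) - \<phi> (x i) ^ p ^ (n - i)))"
    by (intro dvd_sum) simp
  moreover have "witt_ghost p (Suc n) x - \<phi> (witt_ghost p n x)
      = (\<Sum>i\<le>n. of_nat p ^ i * (x i ^ p ^ (Suc n - i) - \<phi> (x i) ^ p ^ (n - i)))
        + of_nat p ^ Suc n * x (Suc n)"
    unfolding ring_hom_on_witt_ghost[OF hom]
    by (simp add: witt_ghost_Suc witt_ghost_def right_diff_distrib sum_subtractf)
  ultimately show ?thesis
    by simp
qed

lemma witt_ghost_surj_upto: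
  fixes G :: "nat \<Rightarrow> 'a::comm_ring_1"
  assumes hom: "ring_hom_on \<phi>" and lift: "\<And>a. of_nat p dvd \<phi> a - a ^ p"
    and compat: "\<And>n. of_nat p ^ Suc n dvd G (Suc n) - \<phi> (G n)"
  shows "\<exists>x. \<forall>k\<le>N. witt_ghost p k x = G k"
proof (induction N)
  case 0
  show ?case
    by (auto simp: witt_ghost_0)
next
  case (Suc N)
  then obtain x where x: "\<forall>k\<le>N. witt_ghost p k x = G k"
    by blast
  let ?x0 = "x(Suc N := 0)"
  have x0: "witt_ghost p k ?x0 = G k" if "k \<le> N" for k
    using x that witt_ghost_cong[of k ?x0 x] by simp
  have "of_nat p ^ Suc N dvd G (Suc N) - \<phi> (G N)"
    by (rule compat)
  moreover have "of_nat p ^ Suc N dvd witt_ghost p (Suc N) ?x0 - \<phi> (G N)"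
    using witt_ghost_frobenius_lift_congruence[OF hom lift, of N ?x0] x0[of N] by simp
  ultimately have "of_nat p ^ Suc N dvd (G (Suc N) - \<phi> (G N)) - (witt_ghost p (Suc N) ?x0 - \<phi> (G N))"
    by (rule dvd_diff)
  then have "of_nat p ^ Suc N dvd G (Suc N) - witt_ghost p (Suc N) ?x0"
    by simp
  then obtain q where q: "G (Suc N) - witt_ghost p (Suc N) ?x0 = of_nat p ^ Suc N * q"
    by (elim dvdE)
  have "witt_ghost p k (x(Suc N := q)) = G k" if "k \<le> Suc N" for k
  proof (cases "k \<le> N")
    case True
    then show ?thesis
      using x0[of k] witt_ghost_cong[of k "x(Suc N := q)" ?x0] by simp
  next
    case False
    with that have "k = Suc N"
      by simp
    with q show ?thesis
      by (simp add: witt_ghost_Suc algebra_simps)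
  qed
  then show ?case
    by blast
qed

lemma witt_ghost_surj:
  fixes G :: "nat \<Rightarrow> 'a::comm_ring_1"
  assumes torsion_free: "\<forall>a::'a. of_nat p * a = 0 \<longrightarrow> a = 0"
    and hom: "ring_hom_on \<phi>" and lift: "\<And>a. of_nat p dvd \<phi> a - a ^ p"
    and compat: "\<And>n. of_nat p ^ Suc n dvd G (Suc n) - \<phi> (G n)"
  shows "\<exists>x. \<forall>n. witt_ghost p n x = G n"
proof -
  have "\<forall>N. \<exists>x. \<forall>k\<le>N. witt_ghost p k x = G k"
    using witt_ghost_surj_upto[OF hom lift compat] by blast
  then obtain X where X: "\<And>N k. k \<le> N \<Longrightarrow> witt_ghost p k (X N) = G k"
    by (metis choice)
  have "X k k = X n k" if "k \<le> n" for k n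
    by (rule witt_ghost_eq_upto[OF torsion_free]) (use X that in simp)
  then have "witt_ghost p n (\<lambda>k. X k k) = witt_ghost p n (X n)" for n
    by (intro witt_ghost_cong) simp
  then show ?thesis
    using X by auto
qed

definition mpoly_frob :: "nat \<Rightarrow> 'v mpoly \<Rightarrow> 'v mpoly" where
  "mpoly_frob p = mpoly_eval (\<lambda>v. mvar v ^ p)"

lemma ring_hom_on_mpoly_frob: "ring_hom_on (mpoly_frob p)"
  by (simp add: mpoly_frob_def ring_hom_on_mpoly_eval)

lemma mpoly_frob_congruence:
  assumes "prime p"
  shows "of_nat p dvd mpoly_frob p P - P ^ p"
  using subset_refl[of "Poly_Mapping.keys P"]
proof (induction P rule: frag_induction)
  case zero
  then show ?case
    using prime_gt_0_nat[OF assms] by (simp add: mpoly_frob_def mpoly_eval_zero power_0_left)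
next
  case (one m)
  have "mpoly_frob p (Poly_Mapping.single m 1) = monomial_eval mvar m ^ p"
    by (simp add: mpoly_frob_def mpoly_eval_single monomial_eval_def prod_power_distrib
        flip: power_mult add: mult.commute)
  then show ?case
    by (simp add: monomial_eval_mvar)
next
  case (diff a b)
  have "mpoly_frob p (a - b) - (a - b) ^ p
      = (mpoly_frob p a - a ^ p) - (mpoly_frob p b - b ^ p) + ((a - b + b) ^ p - (a - b) ^ p - b ^ p)"
    by (simp add: ring_hom_on_diff[OF ring_hom_on_mpoly_frob] algebra_simps)
  also have "of_nat p dvd \<dots>"
    using dvd_add[OF dvd_diff[OF diff(1,2)] prime_dvd_add_power_diff[OF assms, of "a - b" b]] .
  finally show ?case .
qed

lemma witt_polys_ghost:
  fixes G :: "nat \<Rightarrow> 'v mpoly"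
  assumes "prime p"
    and "\<And>n. of_nat p ^ Suc n dvd G (Suc n) - mpoly_frob p (G n)"
  shows "witt_ghost p n (witt_polys p G) = G n"
proof -
  have torsion_free: "\<forall>P::'v mpoly. of_nat p * P = 0 \<longrightarrow> P = 0"
    using assms(1) by (intro mpoly_no_p_torsion) auto
  obtain \<Phi> where \<Phi>: "\<forall>n. witt_ghost p n \<Phi> = G n"
    using witt_ghost_surj[OF torsion_free ring_hom_on_mpoly_frob mpoly_frob_congruence[OF assms(1)] assms(2)]
    by blast
  have "witt_polys p G = \<Phi>"
    unfolding witt_polys_def
    by (rule the_equality) (use \<Phi> witt_ghost_inj[OF torsion_free] in auto)
  with \<Phi> show ?thesis
    by simp
qed

lemma mpoly_frob_witt_ghost_mvar:
  "witt_ghost p (Suc n) (\<lambda>i. mvar (f i)) - mpoly_frob p (witt_ghost p n (\<lambda>i. mvar (f i)))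
    = of_nat p ^ Suc n * mvar (f (Suc n))"
proof -
  have "mpoly_frob p (witt_ghost p n (\<lambda>i. mvar (f i)))
      = (\<Sum>i\<le>n. of_nat p ^ i * (mvar (f i) ^ p) ^ p ^ (n - i))"
    unfolding ring_hom_on_witt_ghost[OF ring_hom_on_mpoly_frob]
    by (simp add: witt_ghost_def mpoly_frob_def mpoly_eval_mvar)
  also have "\<dots> = (\<Sum>i\<le>n. of_nat p ^ i * mvar (f i) ^ p ^ (Suc n - i))"
    by (intro sum.cong) (simp_all add: Suc_diff_le flip: power_mult)
  finally show ?thesis
    by (simp add: witt_ghost_Suc)
qed

definition witt_neg_polys :: "nat \<Rightarrow> nat \<Rightarrow> nat mpoly" where
  "witt_neg_polys p = witt_polys p (\<lambda>n. - witt_ghost p n mvar)"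

definition witt_neg :: "nat \<Rightarrow> (nat \<Rightarrow> 'r::comm_ring_1) \<Rightarrow> nat \<Rightarrow> 'r" where
  "witt_neg p x = (\<lambda>n. mpoly_eval x (witt_neg_polys p n))"

context
  fixes p :: nat
  assumes prime: "prime p"
begin

lemma witt_add_polys_ghost:
  "witt_ghost p n (witt_add_polys p) = witt_ghost p n (\<lambda>i. mvar (Inl i)) + witt_ghost p n (\<lambda>i. mvar (Inr i))"
  unfolding witt_add_polys_def
proof (rule witt_polys_ghost[OF prime])
  fix n
  let ?X = "\<lambda>n. witt_ghost p n (\<lambda>i. mvar (Inl i))" and ?Y = "\<lambda>n. witt_ghost p n (\<lambda>i. mvar (Inr i))"
  have "?X (Suc n) + ?Y (Suc n) - mpoly_frob p (?X n + ?Y n)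
      = (?X (Suc n) - mpoly_frob p (?X n)) + (?Y (Suc n) - mpoly_frob p (?Y n))"
    by (simp add: ring_hom_on_add[OF ring_hom_on_mpoly_frob])
  also have "\<dots> = of_nat p ^ Suc n * (mvar (Inl (Suc n)) + mvar (Inr (Suc n)))"
    by (simp only: mpoly_frob_witt_ghost_mvar distrib_left)
  finally show "of_nat p ^ Suc n dvd ?X (Suc n) + ?Y (Suc n) - mpoly_frob p (?X n + ?Y n)"
    by simp
qed

lemma witt_mult_polys_ghost:
  "witt_ghost p n (witt_mult_polys p) = witt_ghost p n (\<lambda>i. mvar (Inl i)) * witt_ghost p n (\<lambda>i. mvar (Inr i))"
  unfolding witt_mult_polys_def
proof (rule witt_polys_ghost[OF prime])
  fix n
  let ?X = "\<lambda>n. witt_ghost p n (\<lambda>i. mvar (Inl i))" and ?Y = "\<lambda>n. witt_ghost p n (\<lambda>i. mvar (Inr i))"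
  let ?x = "mvar (Inl (Suc n))" and ?y = "mvar (Inr (Suc n))" and ?q = "of_nat p ^ Suc n"
  have frob_XY: "mpoly_frob p (?X n) = ?X (Suc n) - ?q * ?x" "mpoly_frob p (?Y n) = ?Y (Suc n) - ?q * ?y"
    unfolding mpoly_frob_witt_ghost_mvar[of p n Inl, symmetric] mpoly_frob_witt_ghost_mvar[of p n Inr, symmetric]
    by simp_all
  have "?X (Suc n) * ?Y (Suc n) - mpoly_frob p (?X n * ?Y n)
      = ?X (Suc n) * ?Y (Suc n) - (?X (Suc n) - ?q * ?x) * (?Y (Suc n) - ?q * ?y)"
    by (simp only: ring_hom_on_mult[OF ring_hom_on_mpoly_frob] frob_XY)
  also have "\<dots> = ?q * (?x * ?Y (Suc n) + ?X (Suc n) * ?y - ?q * ?x * ?y)"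
    by (simp add: algebra_simps)
  finally show "?q dvd ?X (Suc n) * ?Y (Suc n) - mpoly_frob p (?X n * ?Y n)"
    by simp
qed

lemma witt_frob_polys_ghost: "witt_ghost p n (witt_frob_polys p) = witt_ghost p (Suc n) mvar"
  unfolding witt_frob_polys_def
proof (rule witt_polys_ghost[OF prime])
  fix n
  show "of_nat p ^ Suc n dvd witt_ghost p (Suc (Suc n)) mvar - mpoly_frob p (witt_ghost p (Suc n) mvar)"
    using mpoly_frob_witt_ghost_mvar[of p "Suc n" "\<lambda>i. i"] by (simp add: mult.assoc)
qed

lemma witt_neg_polys_ghost: "witt_ghost p n (witt_neg_polys p) = - witt_ghost p n mvar"
  unfolding witt_neg_polys_def
proof (rule witt_polys_ghost[OF prime])
  fix n
  have "- witt_ghost p (Suc n) mvar - mpoly_frob p (- witt_ghost p n mvar)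
      = - (witt_ghost p (Suc n) mvar - mpoly_frob p (witt_ghost p n mvar))"
    by (simp add: ring_hom_on_uminus[OF ring_hom_on_mpoly_frob])
  also have "\<dots> = - (of_nat p ^ Suc n * mvar (Suc n))"
    using mpoly_frob_witt_ghost_mvar[of p n "\<lambda>i. i"] by simp
  finally show "of_nat p ^ Suc n dvd - witt_ghost p (Suc n) mvar - mpoly_frob p (- witt_ghost p n mvar)"
    by simp
qed

end

definition witt_verschiebung :: "(nat \<Rightarrow> 'r::comm_ring_1) \<Rightarrow> nat \<Rightarrow> 'r" where
  "witt_verschiebung y = (\<lambda>i. case i of 0 \<Rightarrow> 0 | Suc j \<Rightarrow> y j)"

definition witt_power :: "nat \<Rightarrow> nat \<Rightarrow> (nat \<Rightarrow> 'r::comm_ring_1) \<Rightarrow> nat \<Rightarrow> 'r" where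
  "witt_power p k x = (witt_mult p x ^^ k) witt_one"

lemma witt_nsmul_0: "witt_nsmul p 0 x = witt_zero"
  and witt_nsmul_Suc: "witt_nsmul p (Suc k) x = witt_add p x (witt_nsmul p k x)"
  by (simp_all add: witt_nsmul_def)

lemma witt_power_0: "witt_power p 0 x = witt_one"
  and witt_power_Suc: "witt_power p (Suc k) x = witt_mult p x (witt_power p k x)"
  by (simp_all add: witt_power_def)

lemma witt_verschiebung_f1: "x 0 = 0 \<Longrightarrow> witt_verschiebung (witt_f1 x) = x"
  by (rule ext) (simp add: witt_verschiebung_def witt_f1_def split: nat.split)

context
  fixes p :: nat
  assumes prime: "prime p"
begin

lemma witt_ghost_add: "witt_ghost p n (witt_add p x y) = witt_ghost p n x + witt_ghost p n y"
  unfolding witt_add_def ring_hom_on_witt_ghost[OF ring_hom_on_mpoly_eval, symmetric]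
  by (simp add: witt_add_polys_ghost[OF prime] mpoly_eval_add ring_hom_on_witt_ghost[OF ring_hom_on_mpoly_eval]
      mpoly_eval_mvar)

lemma witt_ghost_mult: "witt_ghost p n (witt_mult p x y) = witt_ghost p n x * witt_ghost p n y"
  unfolding witt_mult_def ring_hom_on_witt_ghost[OF ring_hom_on_mpoly_eval, symmetric]
  by (simp add: witt_mult_polys_ghost[OF prime] mpoly_eval_mult ring_hom_on_witt_ghost[OF ring_hom_on_mpoly_eval]
      mpoly_eval_mvar)

lemma witt_ghost_frob: "witt_ghost p n (witt_frob p x) = witt_ghost p (Suc n) x"
  unfolding witt_frob_def ring_hom_on_witt_ghost[OF ring_hom_on_mpoly_eval, symmetric]
  by (simp add: witt_frob_polys_ghost[OF prime] ring_hom_on_witt_ghost[OF ring_hom_on_mpoly_eval]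
      mpoly_eval_mvar)

lemma witt_ghost_neg: "witt_ghost p n (witt_neg p x) = - witt_ghost p n x"
  unfolding witt_neg_def ring_hom_on_witt_ghost[OF ring_hom_on_mpoly_eval, symmetric]
  by (simp add: witt_neg_polys_ghost[OF prime] ring_hom_on_uminus[OF ring_hom_on_mpoly_eval]
      ring_hom_on_witt_ghost[OF ring_hom_on_mpoly_eval] mpoly_eval_mvar)

lemma witt_ghost_zero: "witt_ghost p n witt_zero = 0"
  using prime_gt_0_nat[OF prime] by (simp add: witt_ghost_def witt_zero_def power_0_left)

lemma witt_ghost_one: "witt_ghost p n witt_one = 1"
proof -
  have summand: "of_nat p ^ i * witt_one i ^ p ^ (n - i) = (if i = 0 then 1 else 0)" for i
    using prime_gt_0_nat[OF prime] by (simp add: witt_one_def power_0_left)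
  show ?thesis
    unfolding witt_ghost_def summand by simp
qed

lemma witt_ghost_nsmul: "witt_ghost p n (witt_nsmul p k x) = of_nat k * witt_ghost p n x"
  by (induction k) (simp_all add: witt_nsmul_0 witt_nsmul_Suc witt_ghost_add witt_ghost_zero algebra_simps)

lemma witt_ghost_power: "witt_ghost p n (witt_power p k x) = witt_ghost p n x ^ k"
  by (induction k) (simp_all add: witt_power_0 witt_power_Suc witt_ghost_one witt_ghost_mult)

lemma witt_ghost_verschiebung: "witt_ghost p (Suc n) (witt_verschiebung y) = of_nat p * witt_ghost p n y"
proof -
  have "witt_ghost p (Suc n) (witt_verschiebung y)
      = (\<Sum>i\<le>n. of_nat p ^ Suc i * y i ^ p ^ (n - i)) + witt_verschiebung y 0 ^ p ^ Suc n"
    unfolding witt_ghost_def by (subst sum.atMost_Suc_shift) (simp add: witt_verschiebung_def)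
  then show ?thesis
    using prime_gt_0_nat[OF prime]
    by (simp add: witt_ghost_def witt_verschiebung_def sum_distrib_left mult.assoc power_0_left)
qed

lemmas witt_ghost_simps = witt_ghost_add witt_ghost_mult witt_ghost_frob witt_ghost_neg
  witt_ghost_zero witt_ghost_one witt_ghost_nsmul witt_ghost_power witt_ghost_verschiebung

lemma witt_add_at_0: "witt_add p x y 0 = x 0 + y 0"
  and witt_mult_at_0: "witt_mult p x y 0 = x 0 * y 0"
  and witt_nsmul_at_0: "witt_nsmul p k x 0 = of_nat k * x 0"
  and witt_power_at_0: "witt_power p k x 0 = x 0 ^ k"
  and witt_frob_at_0: "witt_frob p x 0 = x 0 ^ p + of_nat p * x 1"
  using witt_ghost_add[of 0] witt_ghost_mult[of 0] witt_ghost_nsmul[of 0] witt_ghost_power[of 0]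
    witt_ghost_frob[of 0]
  by (simp_all add: witt_ghost_0 witt_ghost_Suc)

end

context
  fixes g :: "'a::comm_ring_1 \<Rightarrow> 'b::comm_ring_1"
  assumes hom: "ring_hom_on g"
begin

lemma witt_map_add: "witt_map g (witt_add p x y) = witt_add p (witt_map g x) (witt_map g y)"
  and witt_map_mult: "witt_map g (witt_mult p x y) = witt_mult p (witt_map g x) (witt_map g y)"
proof -
  have "g \<circ> case_sum x y = case_sum (witt_map g x) (witt_map g y)"
    by (auto simp: witt_map_def split: sum.split)
  then show "witt_map g (witt_add p x y) = witt_add p (witt_map g x) (witt_map g y)"
    and "witt_map g (witt_mult p x y) = witt_mult p (witt_map g x) (witt_map g y)"
    by (simp_all add: witt_map_def witt_add_def witt_mult_def ring_hom_on_mpoly_eval_comp[OF hom])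
qed

lemma witt_map_frob: "witt_map g (witt_frob p x) = witt_frob p (witt_map g x)"
  and witt_map_neg: "witt_map g (witt_neg p x) = witt_neg p (witt_map g x)"
  by (simp_all add: witt_map_def witt_frob_def witt_neg_def ring_hom_on_mpoly_eval_comp[OF hom] comp_def)

lemma witt_map_zero: "witt_map g witt_zero = witt_zero"
  and witt_map_one: "witt_map g witt_one = witt_one"
  by (auto simp: witt_map_def witt_zero_def witt_one_def ring_hom_on_zero[OF hom] ring_hom_on_one[OF hom])

lemma witt_map_nsmul: "witt_map g (witt_nsmul p k x) = witt_nsmul p k (witt_map g x)"
  by (induction k) (simp_all add: witt_nsmul_0 witt_nsmul_Suc witt_map_add witt_map_zero)

lemma witt_map_power: "witt_map g (witt_power p k x) = witt_power p k (witt_map g x)"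
  by (induction k) (simp_all add: witt_power_0 witt_power_Suc witt_map_mult witt_map_one)

lemma witt_map_verschiebung: "witt_map g (witt_verschiebung y) = witt_verschiebung (witt_map g y)"
  by (auto simp: witt_map_def witt_verschiebung_def ring_hom_on_zero[OF hom] split: nat.split)

end

section \<open>Identities between Witt vector operations\<close>

text \<open>An identity between Witt vector operations is checked on ghost components in the
  \<open>p\<close>-torsion free ring of integer polynomials in variables \<open>X\<^sub>j\<^sub>,\<^sub>i\<close>, where ghost components
  determine Witt vectors, and then specialised to arbitrary rings by evaluation.\<close>

type_synonym univ_ring = "(nat \<times> nat) mpoly"

definition univ_var :: "nat \<Rightarrow> nat \<Rightarrow> univ_ring" where
  "univ_var j = (\<lambda>i. mvar (j, i))"

definition univ_eval :: "(nat \<Rightarrow> nat \<Rightarrow> 'r::comm_ring_1) \<Rightarrow> univ_ring \<Rightarrow> 'r" where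
  "univ_eval xs = mpoly_eval (\<lambda>(j, i). xs j i)"

lemma ring_hom_on_univ_eval: "ring_hom_on (univ_eval xs)"
  by (simp add: univ_eval_def ring_hom_on_mpoly_eval)

lemma univ_eval_mvar: "univ_eval xs (mvar (j, i)) = xs j i"
  by (simp add: univ_eval_def mpoly_eval_mvar)

lemma witt_map_univ_eval_var: "witt_map (univ_eval xs) (univ_var j) = xs j"
  by (simp add: witt_map_def univ_var_def univ_eval_mvar)

lemmas witt_map_univ_eval = witt_map_univ_eval_var
  witt_map_add[OF ring_hom_on_univ_eval] witt_map_mult[OF ring_hom_on_univ_eval]
  witt_map_frob[OF ring_hom_on_univ_eval] witt_map_neg[OF ring_hom_on_univ_eval]
  witt_map_zero[OF ring_hom_on_univ_eval] witt_map_one[OF ring_hom_on_univ_eval]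
  witt_map_nsmul[OF ring_hom_on_univ_eval] witt_map_power[OF ring_hom_on_univ_eval]
  witt_map_verschiebung[OF ring_hom_on_univ_eval]

context
  fixes p :: nat
  assumes prime: "prime p"
begin

lemma univ_ring_no_p_torsion: "\<forall>a::univ_ring. of_nat p * a = 0 \<longrightarrow> a = 0"
  using prime by (intro mpoly_no_p_torsion) auto

lemma univ_witt_eqI: "(\<And>n. witt_ghost p n x = witt_ghost p n y) \<Longrightarrow> x = (y :: nat \<Rightarrow> univ_ring)"
  by (rule witt_ghost_inj[OF univ_ring_no_p_torsion])

lemmas univ_ghost_simps = witt_ghost_simps[OF prime]

lemma witt_add_zero_left: "witt_add p witt_zero x = x"
proof -
  have "witt_add p witt_zero (univ_var 0) = univ_var 0"
    by (rule univ_witt_eqI) (simp add: univ_ghost_simps)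
  from arg_cong[OF this, of "witt_map (univ_eval ((!) [x]))"] show ?thesis
    by (simp add: witt_map_univ_eval)
qed

lemma witt_add_neg: "witt_add p x (witt_neg p x) = witt_zero"
proof -
  have "witt_add p (univ_var 0) (witt_neg p (univ_var 0)) = witt_zero"
    by (rule univ_witt_eqI) (simp add: univ_ghost_simps)
  from arg_cong[OF this, of "witt_map (univ_eval ((!) [x]))"] show ?thesis
    by (simp add: witt_map_univ_eval)
qed

lemma witt_add_neg_cancel_right: "witt_add p (witt_add p x (witt_neg p y)) y = x"
proof -
  have "witt_add p (witt_add p (univ_var 0) (witt_neg p (univ_var 1))) (univ_var 1) = univ_var 0"
    by (rule univ_witt_eqI) (simp add: univ_ghost_simps)
  from arg_cong[OF this, of "witt_map (univ_eval ((!) [x, y]))"] show ?thesis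
    by (simp add: witt_map_univ_eval)
qed

lemma witt_nsmul_zero: "witt_nsmul p k witt_zero = witt_zero"
proof -
  have "witt_nsmul p k witt_zero = (witt_zero :: nat \<Rightarrow> univ_ring)"
    by (rule univ_witt_eqI) (simp add: univ_ghost_simps)
  from arg_cong[OF this, of "witt_map (univ_eval ((!) []))"] show ?thesis
    by (simp add: witt_map_univ_eval)
qed

lemma witt_nsmul_add: "witt_nsmul p k (witt_add p x y) = witt_add p (witt_nsmul p k x) (witt_nsmul p k y)"
proof -
  have "witt_nsmul p k (witt_add p (univ_var 0) (univ_var 1))
      = witt_add p (witt_nsmul p k (univ_var 0)) (witt_nsmul p k (univ_var 1))"
    by (rule univ_witt_eqI) (simp add: univ_ghost_simps algebra_simps)
  from arg_cong[OF this, of "witt_map (univ_eval ((!) [x, y]))"] show ?thesis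
    by (simp add: witt_map_univ_eval)
qed

lemma witt_nsmul_mult_left: "witt_nsmul p k (witt_mult p x y) = witt_mult p (witt_nsmul p k x) y"
proof -
  have "witt_nsmul p k (witt_mult p (univ_var 0) (univ_var 1)) = witt_mult p (witt_nsmul p k (univ_var 0)) (univ_var 1)"
    by (rule univ_witt_eqI) (simp add: univ_ghost_simps)
  from arg_cong[OF this, of "witt_map (univ_eval ((!) [x, y]))"] show ?thesis
    by (simp add: witt_map_univ_eval)
qed

lemma witt_nsmul_mult_right: "witt_nsmul p k (witt_mult p x y) = witt_mult p x (witt_nsmul p k y)"
proof -
  have "witt_nsmul p k (witt_mult p (univ_var 0) (univ_var 1)) = witt_mult p (univ_var 0) (witt_nsmul p k (univ_var 1))"
    by (rule univ_witt_eqI) (simp add: univ_ghost_simps algebra_simps)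
  from arg_cong[OF this, of "witt_map (univ_eval ((!) [x, y]))"] show ?thesis
    by (simp add: witt_map_univ_eval)
qed

lemma witt_nsmul_nsmul: "witt_nsmul p k (witt_nsmul p l x) = witt_nsmul p (k * l) x"
proof -
  have "witt_nsmul p k (witt_nsmul p l (univ_var 0)) = witt_nsmul p (k * l) (univ_var 0)"
    by (rule univ_witt_eqI) (simp add: univ_ghost_simps)
  from arg_cong[OF this, of "witt_map (univ_eval ((!) [x]))"] show ?thesis
    by (simp add: witt_map_univ_eval)
qed

lemma witt_power_nsmul: "witt_power p k (witt_nsmul p l x) = witt_nsmul p (l ^ k) (witt_power p k x)"
proof -
  have "witt_power p k (witt_nsmul p l (univ_var 0)) = witt_nsmul p (l ^ k) (witt_power p k (univ_var 0))"
    by (rule univ_witt_eqI) (simp add: univ_ghost_simps power_mult_distrib)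
  from arg_cong[OF this, of "witt_map (univ_eval ((!) [x]))"] show ?thesis
    by (simp add: witt_map_univ_eval)
qed

lemma witt_frob_nsmul: "witt_frob p (witt_nsmul p k x) = witt_nsmul p k (witt_frob p x)"
proof -
  have "witt_frob p (witt_nsmul p k (univ_var 0)) = witt_nsmul p k (witt_frob p (univ_var 0))"
    by (rule univ_witt_eqI) (simp add: univ_ghost_simps)
  from arg_cong[OF this, of "witt_map (univ_eval ((!) [x]))"] show ?thesis
    by (simp add: witt_map_univ_eval)
qed

lemma witt_frob_verschiebung: "witt_frob p (witt_verschiebung x) = witt_nsmul p p x"
proof -
  have "witt_frob p (witt_verschiebung (univ_var 0)) = witt_nsmul p p (univ_var 0)"
    by (rule univ_witt_eqI) (simp add: univ_ghost_simps)
  from arg_cong[OF this, of "witt_map (univ_eval ((!) [x]))"] show ?thesis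
    by (simp add: witt_map_univ_eval)
qed

end

section \<open>Units of the Witt ring\<close>

context
  fixes p :: nat
  assumes prime: "prime p"
begin

lemma witt_nsmul_cancel:
  assumes torsion_free: "\<forall>z::nat \<Rightarrow> 'r::comm_ring_1. witt_nsmul p p z = witt_zero \<longrightarrow> z = witt_zero"
    and eq: "witt_nsmul p p x = witt_nsmul p p (y :: nat \<Rightarrow> 'r)"
  shows "x = y"
proof -
  have "witt_nsmul p p (witt_add p x (witt_neg p y)) = witt_nsmul p p (witt_add p y (witt_neg p y))"
    by (simp add: witt_nsmul_add[OF prime] eq)
  then have "witt_add p x (witt_neg p y) = witt_zero"
    using torsion_free by (simp add: witt_add_neg[OF prime] witt_nsmul_zero[OF prime])
  then show ?thesis
    using witt_add_neg_cancel_right[OF prime, of x y] by (simp add: witt_add_zero_left[OF prime])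
qed

lemma witt_mult_local:
  assumes "\<And>i. i \<le> k \<Longrightarrow> y i = y' i"
  shows "witt_mult p x y k = witt_mult p x y' k"
proof -
  define Y where "Y = (\<lambda>i. if i \<le> k then univ_var 1 i else univ_var 2 i)"
  let ?e = "univ_eval ((!) [x, y, y'])"
  have "witt_mult p (univ_var 0) (univ_var 1) k = witt_mult p (univ_var 0) Y k"
  proof (rule witt_ghost_eq_upto[OF univ_ring_no_p_torsion[OF prime]])
    fix n
    assume "n \<le> k"
    then have "witt_ghost p n (univ_var 1) = witt_ghost p n Y"
      by (intro witt_ghost_cong) (simp add: Y_def)
    then show "witt_ghost p n (witt_mult p (univ_var 0) (univ_var 1)) = witt_ghost p n (witt_mult p (univ_var 0) Y)"
      by (simp add: witt_ghost_mult[OF prime])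
  qed
  then have "witt_map ?e (witt_mult p (univ_var 0) (univ_var 1)) k = witt_map ?e (witt_mult p (univ_var 0) Y) k"
    by (simp add: witt_map_def)
  moreover have "witt_map ?e Y = y'"
    using assms by (auto simp: witt_map_def Y_def univ_var_def univ_eval_mvar)
  ultimately show ?thesis
    by (simp add: witt_map_univ_eval)
qed

lemma witt_mult_update:
  "witt_mult p x (y(n := y n + t)) n = witt_mult p x y n + witt_ghost p n x * t"
proof -
  let ?e = "univ_eval ((!) [x, y, \<lambda>_. t])"
  define T :: univ_ring where "T = mvar (2, 0)"
  define Y where "Y = (univ_var 1)(n := univ_var 1 n + T)"
  define Z where "Z = witt_mult p (univ_var 0) Y"
  define Z' where "Z' = witt_mult p (univ_var 0) (univ_var 1)"
  have "Z i = Z' i" if "i < n" for i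
    unfolding Z_def Z'_def by (rule witt_mult_local) (use that in \<open>simp add: Y_def\<close>)
  then have lower: "(\<Sum>i<n. of_nat p ^ i * Z i ^ p ^ (n - i)) = (\<Sum>i<n. of_nat p ^ i * Z' i ^ p ^ (n - i))"
    by simp
  have "witt_ghost p n Y = witt_ghost p n (univ_var 1) + of_nat p ^ n * T"
    unfolding witt_ghost_lessThan[of p n] by (simp add: Y_def algebra_simps)
  then have "witt_ghost p n Z = witt_ghost p n Z' + of_nat p ^ n * (witt_ghost p n (univ_var 0) * T)"
    by (simp add: Z_def Z'_def witt_ghost_mult[OF prime] algebra_simps)
  then have "of_nat p ^ n * Z n = of_nat p ^ n * (Z' n + witt_ghost p n (univ_var 0) * T)"
    unfolding witt_ghost_lessThan[of p n Z] witt_ghost_lessThan[of p n Z'] lower by (simp add: algebra_simps)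
  then have "Z n = Z' n + witt_ghost p n (univ_var 0) * T"
    by (rule of_nat_power_mult_cancel[OF univ_ring_no_p_torsion[OF prime]])
  then have "?e (Z n) = ?e (Z' n) + witt_ghost p n x * t"
    by (simp add: ring_hom_on_add[OF ring_hom_on_univ_eval] ring_hom_on_mult[OF ring_hom_on_univ_eval]
        ring_hom_on_witt_ghost[OF ring_hom_on_univ_eval] univ_var_def T_def univ_eval_mvar)
  moreover have "witt_map ?e Y = y(n := y n + t)"
    by (auto simp: witt_map_def Y_def univ_var_def T_def univ_eval_mvar ring_hom_on_add[OF ring_hom_on_univ_eval])
  then have "witt_map ?e Z = witt_mult p x (y(n := y n + t))" "witt_map ?e Z' = witt_mult p x y"
    by (simp_all add: Z_def Z'_def witt_map_univ_eval)
  ultimately show ?thesis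
    by (metis witt_map_def)
qed

lemma witt_ghost_unit:
  fixes x :: "nat \<Rightarrow> 'r::comm_ring_1"
  assumes p_radical: "\<forall>r::'r. (1 - of_nat p * r) dvd 1" and unit: "x 0 dvd 1"
  shows "witt_ghost p n x dvd 1"
proof -
  obtain s where s: "witt_ghost p n x = x 0 ^ p ^ n + of_nat p * s"
  proof (cases n)
    case (Suc m)
    then have "witt_ghost p n x = x 0 ^ p ^ n + of_nat p * (\<Sum>i\<le>m. of_nat p ^ i * x (Suc i) ^ p ^ (m - i))"
      unfolding witt_ghost_def Suc by (subst sum.atMost_Suc_shift) (simp add: sum_distrib_left mult.assoc)
    then show ?thesis
      using that by blast
  qed (use that[of 0] in \<open>simp add: witt_ghost_0\<close>)
  have "x 0 ^ p ^ n dvd 1"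
    using dvd_power_same[OF unit, of "p ^ n"] by simp
  then obtain v where v: "1 = x 0 ^ p ^ n * v"
    by (rule dvdE)
  have "x 0 ^ p ^ n * (1 - of_nat p * (- (s * v))) = x 0 ^ p ^ n + of_nat p * s * (x 0 ^ p ^ n * v)"
    by (simp add: algebra_simps)
  then have "witt_ghost p n x = x 0 ^ p ^ n * (1 - of_nat p * (- (s * v)))"
    using s v by simp
  also have "\<dots> dvd 1"
    using mult_dvd_mono[OF \<open>x 0 ^ p ^ n dvd 1\<close> p_radical[rule_format, of "- (s * v)"]] by simp
  finally show ?thesis .
qed

text \<open>Raising the \<open>(n+1)\<close>-st component of \<open>y\<close> by \<open>t\<close> changes that of \<open>x y\<close> by the unit
  multiple \<open>w\<^sub>n\<^sub>+\<^sub>1 x \<cdot> t\<close> (\<open>witt_mult_update\<close>) and leaves the lower ones unchanged, so an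
  inverse of \<open>x\<close> can be built one component at a time.\<close>

lemma witt_mult_fix_component:
  assumes inv: "witt_ghost p (Suc n) x * c = 1"
    and lower: "\<And>k. k \<le> n \<Longrightarrow> witt_mult p x y k = witt_one k"
    and "k \<le> Suc n"
  shows "witt_mult p x (y(Suc n := y (Suc n) - witt_mult p x y (Suc n) * c)) k = witt_one k"
proof (cases "k \<le> n")
  case True
  then show ?thesis
    using lower[of k] witt_mult_local[of k "y(Suc n := _)" y x] by simp
next
  case False
  with assms(3) have "k = Suc n"
    by simp
  have "witt_ghost p (Suc n) x * - (witt_mult p x y (Suc n) * c)
      = - witt_mult p x y (Suc n) * (witt_ghost p (Suc n) x * c)"
    by (simp add: algebra_simps)
  then show ?thesis
    using \<open>k = Suc n\<close> witt_mult_update[of x y "Suc n" "- (witt_mult p x y (Suc n) * c)"]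
    by (simp add: inv witt_one_def)
qed

lemma witt_right_inverse_approx:
  fixes x :: "nat \<Rightarrow> 'r::comm_ring_1"
  assumes "\<forall>r::'r. (1 - of_nat p * r) dvd 1" and "x 0 dvd 1"
  obtains V :: "nat \<Rightarrow> nat \<Rightarrow> 'r"
  where "\<And>n i. i \<le> n \<Longrightarrow> V (Suc n) i = V n i"
    and "\<And>n k. k \<le> n \<Longrightarrow> witt_mult p x (V n) k = witt_one k"
proof -
  have "\<exists>c. witt_ghost p n x * c = 1" for n
  proof -
    obtain c where "1 = witt_ghost p n x * c"
      using witt_ghost_unit[where x = x, OF assms] by (rule dvdE)
    then show ?thesis
      by auto
  qed
  then obtain inv where inv: "\<And>n. witt_ghost p n x * inv n = 1"
    by metis
  define V where "V = rec_nat (\<lambda>i. if i = 0 then inv 0 else 0)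
    (\<lambda>n W. W(Suc n := W (Suc n) - witt_mult p x W (Suc n) * inv (Suc n)))"
  have V_Suc: "V (Suc n) = (V n)(Suc n := V n (Suc n) - witt_mult p x (V n) (Suc n) * inv (Suc n))" for n
    by (simp add: V_def)
  have inverse: "witt_mult p x (V n) k = witt_one k" if "k \<le> n" for n k
    using that
  proof (induction n arbitrary: k)
    case 0
    then show ?case
      using inv[of 0] by (simp add: V_def witt_mult_at_0[OF prime] witt_one_def witt_ghost_0)
  next
    case (Suc n)
    then show ?case
      unfolding V_Suc by (rule witt_mult_fix_component[OF inv])
  qed
  show ?thesis
  proof (rule that)
    show "V (Suc n) i = V n i" if "i \<le> n" for n i
      using that by (simp add: V_Suc)
  qed (rule inverse)
qed

lemma witt_unitI:
  fixes x :: "nat \<Rightarrow> 'r::comm_ring_1"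
  assumes "\<forall>r::'r. (1 - of_nat p * r) dvd 1" and "x 0 dvd 1"
  shows "witt_unit p x"
proof -
  obtain V :: "nat \<Rightarrow> nat \<Rightarrow> 'r"
    where stable: "\<And>n i. i \<le> n \<Longrightarrow> V (Suc n) i = V n i"
      and inverse: "\<And>n k. k \<le> n \<Longrightarrow> witt_mult p x (V n) k = witt_one k"
    using witt_right_inverse_approx[where x = x, OF assms] by blast
  have diagonal: "V i i = V k i" if "i \<le> k" for i k
    using that by (induction k rule: dec_induct) (simp_all add: stable)
  have "witt_mult p x (\<lambda>i. V i i) k = witt_mult p x (V k) k" for k
    by (rule witt_mult_local) (rule diagonal)
  then have "witt_mult p x (\<lambda>i. V i i) = witt_one"
    using inverse by auto
  then show ?thesis
    unfolding witt_unit_def by blast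
qed

end

lemma witt_delta_at_0: "witt_delta p \<sigma> \<delta> \<Longrightarrow> \<delta> a 0 = a"
  using witt_ghost_0[of p "\<delta> a"] by (simp add: witt_delta_def)

lemma funpow_intertwine:
  assumes "\<And>a. \<sigma>' (\<alpha> a) = \<alpha> (\<sigma> a)"
  shows "\<alpha> ((\<sigma> ^^ n) a) = (\<sigma>' ^^ n) (\<alpha> a)"
  by (induction n) (simp_all flip: assms)

lemma witt_delta_natural:
  fixes \<delta> :: "'a::comm_ring_1 \<Rightarrow> nat \<Rightarrow> 'a" and \<delta>' :: "'b::comm_ring_1 \<Rightarrow> nat \<Rightarrow> 'b"
  assumes "\<forall>b::'b. of_nat p * b = 0 \<longrightarrow> b = 0"
    and "witt_delta p \<sigma> \<delta>" "witt_delta p \<sigma>' \<delta>'"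
    and "ring_hom_on \<alpha>" "\<And>a. \<sigma>' (\<alpha> a) = \<alpha> (\<sigma> a)"
  shows "witt_map \<alpha> (\<delta> a) = \<delta>' (\<alpha> a)"
proof (rule witt_ghost_inj[OF assms(1)])
  fix n
  have "witt_ghost p n (witt_map \<alpha> (\<delta> a)) = \<alpha> ((\<sigma> ^^ n) a)"
    using assms(2) by (simp add: witt_map_def witt_delta_def flip: ring_hom_on_witt_ghost[OF assms(4)])
  also have "\<dots> = witt_ghost p n (\<delta>' (\<alpha> a))"
    using assms(3,5) by (simp add: witt_delta_def funpow_intertwine)
  finally show "witt_ghost p n (witt_map \<alpha> (\<delta> a)) = witt_ghost p n (\<delta>' (\<alpha> a))" .
qed

lemma witt_delta_zero:
  assumes "prime p" "\<forall>a::'a. of_nat p * a = 0 \<longrightarrow> a = 0" "ring_hom_on \<sigma>" "witt_delta p \<sigma> (\<delta> :: 'a::comm_ring_1 \<Rightarrow> _)"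
  shows "\<delta> 0 = witt_zero"
proof (rule witt_ghost_inj[OF assms(2)])
  fix n
  have "(\<sigma> ^^ n) 0 = 0"
    by (induction n) (simp_all add: ring_hom_on_zero[OF assms(3)])
  then show "witt_ghost p n (\<delta> 0) = witt_ghost p n witt_zero"
    using assms(4) by (simp add: witt_delta_def witt_ghost_zero[OF assms(1)])
qed

lemma witt_delta_frob:
  assumes "prime p" "\<forall>a::'a. of_nat p * a = 0 \<longrightarrow> a = 0" "witt_delta p \<sigma> (\<delta> :: 'a::comm_ring_1 \<Rightarrow> _)"
  shows "witt_frob p (\<delta> a) = \<delta> (\<sigma> a)"
  by (rule witt_ghost_inj[OF assms(2)])
     (use assms(3) in \<open>simp add: witt_delta_def witt_ghost_frob[OF assms(1)] funpow_swap1\<close>)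

section \<open>The \<open>\<varkappa>\<close>-homomorphism of a \<open>\<varkappa>\<close>-frame\<close>

locale kappa_frame_data =
  fixes p :: nat and I :: "'a::comm_ring_1 set" and \<pi> :: "'a \<Rightarrow> 'r::comm_ring_1"
    and \<sigma> \<sigma>1 :: "'a \<Rightarrow> 'a" and \<delta> :: "'a \<Rightarrow> nat \<Rightarrow> 'a" and \<theta> e :: 'a
  assumes prime: "prime p"
    and frame: "frame p I \<pi> \<sigma> \<sigma>1"
    and no_p_torsion: "\<forall>a::'a. of_nat p * a = 0 \<longrightarrow> a = 0"
    and witt_no_p_torsion: "\<forall>x::nat \<Rightarrow> 'r. witt_nsmul p p x = witt_zero \<longrightarrow> x = witt_zero"
    and theta: "\<And>a. a \<in> I \<Longrightarrow> \<sigma> a = \<theta> * \<sigma>1 a"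
    and unit_e: "e dvd 1"
    and frob_theta: "\<sigma> \<theta> - \<theta> ^ p = of_nat p * e"
    and delta: "witt_delta p \<sigma> \<delta>"
begin

definition kappa :: "'a \<Rightarrow> nat \<Rightarrow> 'r" where
  "kappa a = witt_map \<pi> (\<delta> a)"

lemma hom_\<pi>: "ring_hom_on \<pi>"
  and surj_\<pi>: "surj \<pi>"
  and ideal: "I = {a. \<pi> a = 0}"
  and hom_\<sigma>: "ring_hom_on \<sigma>"
  and radical: "a \<in> I \<Longrightarrow> a + of_nat p * s \<in> jacobson_radical"
  using frame by (simp_all add: frame_def)

lemma generators: "\<exists>(k::nat) c b. (\<forall>i<k. b i \<in> I) \<and> x = (\<Sum>i<k. c i * \<sigma>1 (b i))"
  using frame unfolding frame_def by blast

lemma kappa_add: "kappa (a + b) = witt_add p (kappa a) (kappa b)"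
  and kappa_mult: "kappa (a * b) = witt_mult p (kappa a) (kappa b)"
  and kappa_one: "kappa 1 = witt_one"
  using delta by (simp_all add: kappa_def witt_delta_def witt_map_add[OF hom_\<pi>] witt_map_mult[OF hom_\<pi>]
      witt_map_one[OF hom_\<pi>])

lemma kappa_zero: "kappa 0 = witt_zero"
  by (simp add: kappa_def witt_delta_zero[OF prime no_p_torsion hom_\<sigma> delta] witt_map_zero[OF hom_\<pi>])

lemma kappa_at_0: "kappa a 0 = \<pi> a"
  by (simp add: kappa_def witt_map_def witt_delta_at_0[OF delta])

lemma kappa_frob: "witt_frob p (kappa a) = kappa (\<sigma> a)"
  by (simp add: kappa_def witt_delta_frob[OF prime no_p_torsion delta] flip: witt_map_frob[OF hom_\<pi>])

lemma kappa_of_nat_mult: "kappa (of_nat k * a) = witt_nsmul p k (kappa a)"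
  by (induction k) (simp_all add: kappa_zero witt_nsmul_0 witt_nsmul_Suc kappa_add distrib_right)

lemma kappa_power: "kappa (a ^ k) = witt_power p k (kappa a)"
  by (induction k) (simp_all add: kappa_one witt_power_0 witt_power_Suc kappa_mult)

lemma kappa_ideal_at_0: "a \<in> I \<Longrightarrow> kappa a 0 = 0"
  using ideal by (simp add: kappa_at_0)

lemma nsmul_f1_kappa:
  assumes "a \<in> I"
  shows "witt_nsmul p p (witt_f1 (kappa a)) = witt_mult p (kappa \<theta>) (kappa (\<sigma>1 a))"
proof -
  have "witt_nsmul p p (witt_f1 (kappa a)) = witt_frob p (witt_verschiebung (witt_f1 (kappa a)))"
    by (simp add: witt_frob_verschiebung[OF prime])
  also have "\<dots> = kappa (\<sigma> a)"
    using assms by (simp add: witt_verschiebung_f1 kappa_ideal_at_0 kappa_frob)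
  finally show ?thesis
    using assms by (simp add: theta kappa_mult)
qed

lemma kappa_theta_mult_divisible:
  fixes k :: nat
  assumes "\<forall>i<k. b i \<in> I"
  shows "\<exists>w. witt_nsmul p p w = kappa (\<theta> * (\<Sum>i<k. c i * \<sigma>1 (b i)))"
  using assms
proof (induction k)
  case 0
  show ?case
    by (rule exI[of _ witt_zero]) (simp add: witt_nsmul_zero[OF prime] kappa_zero)
next
  case (Suc k)
  then obtain w where w: "witt_nsmul p p w = kappa (\<theta> * (\<Sum>i<k. c i * \<sigma>1 (b i)))"
    by auto
  let ?w = "witt_add p w (witt_mult p (kappa (c k)) (witt_f1 (kappa (b k))))"
  have "witt_nsmul p p ?w
      = witt_add p (kappa (\<theta> * (\<Sum>i<k. c i * \<sigma>1 (b i)))) (witt_mult p (kappa (c k)) (kappa (\<theta> * \<sigma>1 (b k))))"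
    using Suc.prems
    by (simp add: witt_nsmul_add[OF prime] witt_nsmul_mult_right[OF prime] w nsmul_f1_kappa kappa_mult)
  also have "\<dots> = kappa (\<theta> * (\<Sum>i<k. c i * \<sigma>1 (b i)) + c k * (\<theta> * \<sigma>1 (b k)))"
    by (simp only: kappa_add kappa_mult)
  also have "\<theta> * (\<Sum>i<k. c i * \<sigma>1 (b i)) + c k * (\<theta> * \<sigma>1 (b k)) = \<theta> * (\<Sum>i<Suc k. c i * \<sigma>1 (b i))"
    by (simp add: algebra_simps)
  finally show ?case
    by blast
qed

lemma kappa_theta_divisible: "\<exists>u. witt_nsmul p p u = kappa \<theta>"
proof -
  obtain k c b where "\<forall>i<(k::nat). b i \<in> I" and one: "1 = (\<Sum>i<k. c i * \<sigma>1 (b i))"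
    using generators[of 1] by blast
  then show ?thesis
    using kappa_theta_mult_divisible[of k b c] by (simp flip: one)
qed

lemma p_radical_quotient: "(1 - of_nat p * r) dvd (1::'r)"
proof -
  obtain s where s: "r = \<pi> s"
    using surj_\<pi> unfolding surj_def by blast
  have "0 \<in> I"
    using ideal by (simp add: ring_hom_on_zero[OF hom_\<pi>])
  then have "0 + of_nat p * s \<in> jacobson_radical"
    by (rule radical)
  then have "(1 - (0 + of_nat p * s) * 1) dvd 1"
    unfolding jacobson_radical_def by blast
  then have "\<pi> (1 - of_nat p * s) dvd 1"
    using ring_hom_on_unit[OF hom_\<pi>] by simp
  then show ?thesis
    using s by (simp add: ring_hom_on_diff[OF hom_\<pi>] ring_hom_on_mult[OF hom_\<pi>]
        ring_hom_on_one[OF hom_\<pi>] ring_hom_on_of_nat[OF hom_\<pi>])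
qed

context
  fixes u :: "nat \<Rightarrow> 'r"
  assumes u: "witt_nsmul p p u = kappa \<theta>"
begin

lemma f1_kappa: "a \<in> I \<Longrightarrow> witt_f1 (kappa a) = witt_mult p u (kappa (\<sigma>1 a))"
  by (rule witt_nsmul_cancel[OF prime witt_no_p_torsion])
     (simp add: nsmul_f1_kappa witt_nsmul_mult_left[OF prime] u)

lemma frob_u: "witt_frob p u = witt_add p (witt_nsmul p (p ^ (p - 1)) (witt_power p p u)) (kappa e)"
proof (rule witt_nsmul_cancel[OF prime witt_no_p_torsion])
  have "p ^ p = p * p ^ (p - 1)"
    using prime_gt_0_nat[OF prime] by (simp flip: power_Suc)
  have "witt_nsmul p p (witt_frob p u) = kappa (\<sigma> \<theta>)"
    by (simp add: witt_frob_nsmul[OF prime, symmetric] u kappa_frob)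
  also have "\<sigma> \<theta> = \<theta> ^ p + of_nat p * e"
    using frob_theta by (simp add: algebra_simps)
  also have "kappa (\<theta> ^ p + of_nat p * e) = witt_add p (witt_power p p (witt_nsmul p p u)) (witt_nsmul p p (kappa e))"
    by (simp add: kappa_add kappa_power kappa_of_nat_mult u)
  also have "\<dots> = witt_nsmul p p (witt_add p (witt_nsmul p (p ^ (p - 1)) (witt_power p p u)) (kappa e))"
    using \<open>p ^ p = p * p ^ (p - 1)\<close>
    by (simp add: witt_power_nsmul[OF prime] witt_nsmul_nsmul[OF prime] witt_nsmul_add[OF prime])
  finally show "witt_nsmul p p (witt_frob p u)
      = witt_nsmul p p (witt_add p (witt_nsmul p (p ^ (p - 1)) (witt_power p p u)) (kappa e))" .
qed

text \<open>The \<open>0\<close>-th component of \<open>frob_u\<close> reads \<open>u\<^sub>0\<^sup>p (1 - p\<^sup>p\<^sup>-\<^sup>1) = \<pi> e - p u\<^sub>1\<close>; as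
  \<open>p\<close> lies in the radical of \<open>R\<close> and \<open>\<pi> e\<close> is a unit, so is \<open>u\<^sub>0\<close>.\<close>

lemma unit_u: "witt_unit p u"
proof (rule witt_unitI[OF prime])
  show p_radical: "\<forall>r::'r. (1 - of_nat p * r) dvd 1"
    using p_radical_quotient by blast
  obtain E where E: "1 = \<pi> e * E"
    using ring_hom_on_unit[OF hom_\<pi> unit_e] by (rule dvdE)
  have "p ^ (p - 1) = p * p ^ (p - 2)"
    using prime_ge_2_nat[OF prime] by (simp flip: power_Suc add: Suc_diff_Suc numeral_2_eq_2)
  then have pp: "of_nat (p ^ (p - 1)) = (of_nat p * of_nat (p ^ (p - 2)) :: 'r)"
    by (simp only: of_nat_mult)
  have "u 0 ^ p + of_nat p * u 1 = of_nat (p ^ (p - 1)) * u 0 ^ p + \<pi> e"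
    using arg_cong[OF frob_u, of "\<lambda>x. x 0"]
    by (simp add: witt_frob_at_0[OF prime] witt_add_at_0[OF prime] witt_nsmul_at_0[OF prime]
        witt_power_at_0[OF prime] kappa_at_0)
  then have "u 0 ^ p * (1 - of_nat p * of_nat (p ^ (p - 2))) = \<pi> e - of_nat p * u 1"
    unfolding pp by (simp add: algebra_simps)
  also have "\<dots> = \<pi> e - of_nat p * u 1 * (\<pi> e * E)"
    by (simp flip: E)
  also have "\<dots> = \<pi> e * (1 - of_nat p * (u 1 * E))"
    by (simp add: algebra_simps)
  also have "\<dots> dvd 1"
    using mult_dvd_mono[OF ring_hom_on_unit[OF hom_\<pi> unit_e] p_radical[rule_format, of "u 1 * E"]]
    by simp
  finally have "u 0 * u 0 ^ (p - 1) dvd 1"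
    using prime_gt_0_nat[OF prime] by (cases p) (simp_all add: dvd_mult_left)
  then show "u 0 dvd 1"
    by (rule dvd_mult_left)
qed

lemma kappa_witt_frame_uhom: "witt_frame_uhom p I \<sigma> \<sigma>1 u kappa"
  unfolding witt_frame_uhom_def
  using unit_u kappa_add kappa_mult kappa_one kappa_ideal_at_0 kappa_frob f1_kappa by blast

end

end

theorem proposition6p3:
  fixes p :: nat
    and I :: "'a::comm_ring_1 set" and \<pi> :: "'a \<Rightarrow> 'r::comm_ring_1"
    and \<sigma> \<sigma>1 :: "'a \<Rightarrow> 'a" and \<delta> :: "'a \<Rightarrow> nat \<Rightarrow> 'a"
  assumes "prime p"
    and "kappa_frame p I \<pi> \<sigma> \<sigma>1"
    and "witt_delta p \<sigma> \<delta>"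
  shows "(\<exists>u. witt_frame_uhom p I \<sigma> \<sigma>1 u (\<lambda>a. witt_map \<pi> (\<delta> a))
               \<and> (\<forall>a. witt_map \<pi> (\<delta> a) 0 = \<pi> a))
    \<and> (\<forall>(I' :: 'b::comm_ring_1 set) (\<pi>' :: 'b \<Rightarrow> 's::comm_ring_1) \<sigma>' \<sigma>1' \<delta>' v \<alpha>.
          kappa_frame p I' \<pi>' \<sigma>' \<sigma>1' \<and> witt_delta p \<sigma>' \<delta>' \<and>
          frame_uhom I \<sigma> \<sigma>1 I' \<sigma>' \<sigma>1' v \<alpha> \<longrightarrow>
          (\<forall>a. witt_map \<pi>' (witt_map \<alpha> (\<delta> a)) = witt_map \<pi>' (\<delta>' (\<alpha> a))))"
proof (intro conjI allI impI)
  obtain \<theta> e where "\<forall>a\<in>I. \<sigma> a = \<theta> * \<sigma>1 a" "e dvd 1" "\<sigma> \<theta> - \<theta> ^ p = of_nat p * e"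
    using assms(2) unfolding kappa_frame_def by blast
  with assms interpret kappa_frame_data p I \<pi> \<sigma> \<sigma>1 \<delta> \<theta> e
    unfolding kappa_frame_def by unfold_locales auto
  obtain u where "witt_nsmul p p u = kappa \<theta>"
    using kappa_theta_divisible by blast
  then have "witt_frame_uhom p I \<sigma> \<sigma>1 u kappa"
    by (rule kappa_witt_frame_uhom)
  moreover have "kappa = (\<lambda>a. witt_map \<pi> (\<delta> a))"
    by (simp add: kappa_def fun_eq_iff)
  ultimately show "\<exists>u. witt_frame_uhom p I \<sigma> \<sigma>1 u (\<lambda>a. witt_map \<pi> (\<delta> a)) \<and> (\<forall>a. witt_map \<pi> (\<delta> a) 0 = \<pi> a)"
    using kappa_at_0 by auto
next
  fix I' :: "'b set" and \<pi>' :: "'b \<Rightarrow> 's" and \<sigma>' \<sigma>1' \<delta>' v \<alpha> a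
  assume "kappa_frame p I' \<pi>' \<sigma>' \<sigma>1' \<and> witt_delta p \<sigma>' \<delta>' \<and> frame_uhom I \<sigma> \<sigma>1 I' \<sigma>' \<sigma>1' v \<alpha>"
  then have "\<forall>b::'b. of_nat p * b = 0 \<longrightarrow> b = 0" "witt_delta p \<sigma>' \<delta>'"
    and "ring_hom_on \<alpha>" "\<And>a. \<sigma>' (\<alpha> a) = \<alpha> (\<sigma> a)"
    by (simp_all add: kappa_frame_def frame_uhom_def)
  then have "witt_map \<alpha> (\<delta> a) = \<delta>' (\<alpha> a)"
    by (rule witt_delta_natural[OF _ assms(3)])
  then show "witt_map \<pi>' (witt_map \<alpha> (\<delta> a)) = witt_map \<pi>' (\<delta>' (\<alpha> a))"
    by simp
qed

end
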